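(* Let $G$ be a graph and $T$ a tree 3-spanner of $G$. Let $u,p,q$ be vertices of $G$ such that $u$ lies on the $p,q$-path of $T$ and $p,q\notin N_T[u]$. Then every $p,q$-path of $G$ contains a vertex of $N_T[u]$.
   Context: Graphs are finite, simple and loopless. $N_T[u]$ denotes the closed neighbourhood of $u$ in $T$, that is, $u$ together with its neighbours in $T$. A tree 3-spanner of $G$ is a spanning subgraph $T$ of $G$ that is a tree and satisfies $d_T(a,b)\le 3\,d_G(a,b)$ for all vertices $a,b$ of $G$. *)

theory Defs
  imports Main
begin

definition graph :: "'a set \<Rightarrow> ('a \<Rightarrow> 'a \<Rightarrow> bool) \<Rightarrow> bool" where
  "graph V E \<longleftrightarrow> finite V \<and> (\<forall>a b. E a b \<longrightarrow> a \<in> V \<and> b \<in> V)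
     \<and> (\<forall>a b. E a b \<longrightarrow> E b a) \<and> (\<forall>a. \<not> E a a)"

definition walk :: "('a \<Rightarrow> 'a \<Rightarrow> bool) \<Rightarrow> 'a list \<Rightarrow> bool" where
  "walk E xs \<longleftrightarrow> xs \<noteq> [] \<and> (\<forall>i. Suc i < length xs \<longrightarrow> E (xs ! i) (xs ! Suc i))"

definition is_path :: "('a \<Rightarrow> 'a \<Rightarrow> bool) \<Rightarrow> 'a \<Rightarrow> 'a \<Rightarrow> 'a list \<Rightarrow> bool" where
  "is_path E p q xs \<longleftrightarrow> walk E xs \<and> distinct xs \<and> hd xs = p \<and> last xs = q"

definition dist :: "('a \<Rightarrow> 'a \<Rightarrow> bool) \<Rightarrow> 'a \<Rightarrow> 'a \<Rightarrow> nat" where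
  "dist E a b = (LEAST n. \<exists>xs. walk E xs \<and> hd xs = a \<and> last xs = b \<and> length xs = Suc n)"

definition connected_on :: "'a set \<Rightarrow> ('a \<Rightarrow> 'a \<Rightarrow> bool) \<Rightarrow> bool" where
  "connected_on V E \<longleftrightarrow> (\<forall>a\<in>V. \<forall>b\<in>V. \<exists>xs. walk E xs \<and> hd xs = a \<and> last xs = b)"

text \<open>A cycle: closed walk x0 ... xk with k >= 3, x0 = xk, and x0..x(k-1) distinct.\<close>
definition is_cycle :: "('a \<Rightarrow> 'a \<Rightarrow> bool) \<Rightarrow> 'a list \<Rightarrow> bool" where
  "is_cycle E xs \<longleftrightarrow> walk E xs \<and> length xs \<ge> 4 \<and> hd xs = last xs \<and> distinct (butlast xs)"

definition tree :: "'a set \<Rightarrow> ('a \<Rightarrow> 'a \<Rightarrow> bool) \<Rightarrow> bool" where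
  "tree V E \<longleftrightarrow> graph V E \<and> V \<noteq> {} \<and> connected_on V E \<and> (\<nexists>xs. is_cycle E xs)"

definition tree_3_spanner :: "'a set \<Rightarrow> ('a \<Rightarrow> 'a \<Rightarrow> bool) \<Rightarrow> ('a \<Rightarrow> 'a \<Rightarrow> bool) \<Rightarrow> bool" where
  "tree_3_spanner V E T \<longleftrightarrow> (\<forall>a b. T a b \<longrightarrow> E a b) \<and> tree V T
     \<and> (\<forall>a\<in>V. \<forall>b\<in>V. dist T a b \<le> 3 * dist E a b)"

definition closed_nbhd :: "('a \<Rightarrow> 'a \<Rightarrow> bool) \<Rightarrow> 'a \<Rightarrow> 'a set" where
  "closed_nbhd T u = insert u {v. T u v}"

end

theory Submission
  imports Defs
begin

text \<open>Let S be the set of vertices reachable from p in T without passing through u. Since T is a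
tree and u is an interior vertex of the p,q-path of T, q is not in S. A p,q-path of G avoiding
N_T[u] therefore has an edge xy with x in S and y outside S. The spanner condition gives a
T-walk from x to y with at most three edges; such a walk can only meet u if u is x, y or a
T-neighbour of one of them, which is excluded, so the walk avoids u and y lies in S after all.\<close>

lemma walk_iff_successively: "walk E xs \<longleftrightarrow> xs \<noteq> [] \<and> successively E xs"
  unfolding walk_def successively_conv_nth by blast

lemma walk_append_tl:
  assumes "walk E xs" "walk E ys" "last xs = hd ys"
  shows "walk E (xs @ tl ys)"
proof (cases "tl ys = []")
  case True
  then show ?thesis using assms(1) by simp
next
  case False
  from assms(2) have "successively E (hd ys # tl ys)"
    by (simp add: walk_iff_successively)
  with False have "E (hd ys) (hd (tl ys))" "successively E (tl ys)"
    by (cases "tl ys"; simp)+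
  then show ?thesis
    using assms(1,3) by (simp add: walk_iff_successively successively_append_iff)
qed

lemma last_append_tl: "ys \<noteq> [] \<Longrightarrow> last xs = hd ys \<Longrightarrow> xs \<noteq> [] \<Longrightarrow> last (xs @ tl ys) = last ys"
  by (cases ys) (auto simp: last_append)

lemma set_append_tl_subset: "set (xs @ tl ys) \<subseteq> set xs \<union> set ys"
  by (cases ys) auto

lemma walk_rev:
  assumes "\<And>a b. E a b \<Longrightarrow> E b a" "walk E xs"
  shows "walk E (rev xs)"
proof -
  have "successively (\<lambda>a b. E b a) xs"
    using assms by (auto simp: walk_iff_successively intro: successively_mono)
  then show ?thesis
    using assms(2) by (simp add: walk_iff_successively)
qed

lemma walk_imp_path:
  assumes "walk E xs"
  shows "\<exists>ys. is_path E (hd xs) (last xs) ys \<and> set ys \<subseteq> set xs"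
  using assms
proof (induction xs rule: length_induct)
  case (1 xs)
  show ?case
  proof (cases "distinct xs")
    case True
    then show ?thesis using "1.prems" by (auto simp: is_path_def)
  next
    case False
    then obtain as x bs cs where xs: "xs = as @ [x] @ bs @ [x] @ cs"
      using not_distinct_decomp by blast
    let ?zs = "as @ [x] @ cs"
    have "successively E ((x # bs) @ (x # cs))"
      using "1.prems" unfolding xs walk_iff_successively by (simp add: successively_append_iff)
    then have "successively E (x # cs)"
      by (simp only: successively_append_iff)
    then have "walk E ?zs"
      using "1.prems" unfolding xs walk_iff_successively
      by (auto simp: successively_append_iff)
    moreover have "length ?zs < length xs" "hd ?zs = hd xs" "last ?zs = last xs"
      "set ?zs \<subseteq> set xs"
      unfolding xs by (auto simp: hd_append)
    ultimately show ?thesis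
      using "1.IH" by (metis order_trans)
  qed
qed

lemma walk_crossing_edge:
  assumes "walk E xs" "hd xs \<in> S" "last xs \<notin> S"
  shows "\<exists>x y. E x y \<and> x \<in> S \<and> y \<notin> S \<and> x \<in> set xs \<and> y \<in> set xs"
  using assms unfolding walk_iff_successively
proof (induction xs)
  case Nil
  then show ?case by simp
next
  case (Cons a xs)
  show ?case
  proof (cases "xs = []")
    case True
    then show ?thesis using Cons.prems by simp
  next
    case False
    then have "E a (hd xs)" "successively E xs"
      using Cons.prems by (auto simp: successively_Cons)
    then show ?thesis
      using Cons False by (cases "hd xs \<in> S") (auto intro: hd_in_set)
  qed
qed

lemma walk_length_le_4_near_ends:
  assumes "walk E w" "length w \<le> 4" "v \<in> set w"
  shows "v = hd w \<or> v = last w \<or> E (hd w) v \<or> E v (last w)"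
proof -
  have "w \<in> {[a] | a. True} \<union> {[a, b] | a b. True} \<union> {[a, b, c] | a b c. True}
      \<union> {[a, b, c, d] | a b c d. True}"
    using assms(1,2) unfolding walk_def
    by (cases w rule: remdups_adj.cases; cases "tl (tl w)" rule: remdups_adj.cases) auto
  then show ?thesis
    using assms(1,3) by (auto simp: walk_iff_successively)
qed

lemma dist_le_1_if_adjacent: "E x y \<Longrightarrow> dist E x y \<le> 1"
  unfolding dist_def
  by (rule Least_le) (rule exI[of _ "[x, y]"], simp add: walk_def)

lemma walk_of_length_dist:
  assumes "walk E w" "hd w = x" "last w = y"
  shows "\<exists>w'. walk E w' \<and> hd w' = x \<and> last w' = y \<and> length w' = Suc (dist E x y)"
proof -
  have "\<exists>n w'. walk E w' \<and> hd w' = x \<and> last w' = y \<and> length w' = Suc n"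
    using assms by (intro exI[of _ "length w - 1"] exI[of _ w]) (auto simp: walk_def)
  then show ?thesis
    unfolding dist_def by (rule LeastI_ex)
qed

lemma cycle_through_vertex:
  assumes sym: "\<And>a b. E a b \<Longrightarrow> E b a"
    and "E a u" "E u b" "a \<noteq> b"
    and "walk E w" "hd w = a" "last w = b" "u \<notin> set w"
  shows "\<exists>xs. is_cycle E xs"
proof -
  obtain D where D: "is_path E a b D" "set D \<subseteq> set w"
    using walk_imp_path[OF assms(5)] assms(6,7) by blast
  then have "length D \<ge> 2"
    using \<open>a \<noteq> b\<close> by (cases D rule: remdups_adj.cases) (auto simp: is_path_def walk_def)
  moreover have "successively E (D @ [u])" "E u (hd D)"
    using D assms(2,3) sym by (auto simp: is_path_def walk_iff_successively successively_append_iff)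
  ultimately have "is_cycle E (u # D @ [u])"
    using D assms(8) by (cases D) (auto simp: is_cycle_def is_path_def walk_iff_successively
        butlast_append)
  then show ?thesis by blast
qed

lemma tree_walk_through_path_vertex:
  assumes "tree V T" "is_path T p q P" "u \<in> set P" "u \<noteq> p" "u \<noteq> q"
    and "walk T w" "hd w = p" "last w = q"
  shows "u \<in> set w"
proof (rule ccontr)
  assume "u \<notin> set w"
  have sym: "\<And>a b. T a b \<Longrightarrow> T b a" and acyclic: "\<nexists>xs. is_cycle T xs"
    using assms(1) unfolding tree_def graph_def by auto
  obtain ys zs where P: "P = ys @ u # zs"
    using assms(3) split_list by metis
  have ne: "ys \<noteq> []" "zs \<noteq> []"
    using assms(2,4,5) P by (auto simp: is_path_def)
  then have ends: "hd ys = p" "last zs = q" and dist: "u \<notin> set ys" "u \<notin> set zs"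
    "set ys \<inter> set zs = {}"
    using assms(2) P by (auto simp: is_path_def)
  have "walk T ys" "walk T zs" "T (last ys) u" "T u (hd zs)"
    using assms(2) ne unfolding P is_path_def walk_iff_successively
    by (auto simp: successively_append_iff successively_Cons)
  \<comment> \<open>from the T-neighbour of u before it on P, back to p, along w to q, back to the neighbour after u\<close>
  define W1 where "W1 = rev ys @ tl w"
  define W where "W = W1 @ tl (rev zs)"
  have "w \<noteq> []"
    using assms(6) by (simp add: walk_def)
  have "walk T W1"
    unfolding W1_def using \<open>walk T ys\<close> assms(6)
    by (intro walk_append_tl walk_rev[OF sym]) (simp_all add: last_rev ends assms(7))
  moreover have "last W1 = q"
    unfolding W1_def using ne \<open>w \<noteq> []\<close> by (simp add: last_append_tl last_rev ends assms(7,8))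
  ultimately have "walk T W"
    unfolding W_def using \<open>walk T zs\<close>
    by (intro walk_append_tl walk_rev[OF sym]) (simp_all add: hd_rev ends)
  moreover have "hd W = last ys"
    unfolding W_def W1_def using ne by (simp add: hd_rev)
  moreover have "last W = hd zs"
    unfolding W_def using ne \<open>walk T W1\<close> \<open>last W1 = q\<close>
    by (simp add: last_append_tl hd_rev last_rev ends walk_def)
  moreover have "last ys \<noteq> hd zs"
    using dist(3) ne by (metis disjoint_iff hd_in_set last_in_set)
  moreover have "u \<notin> set W"
    unfolding W_def W1_def using dist \<open>u \<notin> set w\<close> set_append_tl_subset by fastforce
  ultimately show False
    using cycle_through_vertex[OF sym \<open>T (last ys) u\<close> \<open>T u (hd zs)\<close>] acyclic by blast
qed

definition reach_avoiding :: "('a \<Rightarrow> 'a \<Rightarrow> bool) \<Rightarrow> 'a \<Rightarrow> 'a \<Rightarrow> 'a set" where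
  "reach_avoiding E u p = {v. \<exists>w. walk E w \<and> hd w = p \<and> last w = v \<and> u \<notin> set w}"

lemma reach_avoiding_start: "p \<noteq> u \<Longrightarrow> p \<in> reach_avoiding E u p"
  unfolding reach_avoiding_def by (intro CollectI exI[of _ "[p]"]) (simp add: walk_def)

lemma reach_avoiding_walk:
  assumes "x \<in> reach_avoiding E u p" "walk E w" "hd w = x" "last w = y" "u \<notin> set w"
  shows "y \<in> reach_avoiding E u p"
proof -
  obtain w0 where w0: "walk E w0" "hd w0 = p" "last w0 = x" "u \<notin> set w0"
    using assms(1) unfolding reach_avoiding_def by blast
  moreover have "w0 \<noteq> []" "w \<noteq> []"
    using w0(1) assms(2) by (auto simp: walk_def)
  ultimately have "walk E (w0 @ tl w)" "hd (w0 @ tl w) = p" "last (w0 @ tl w) = y"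
    "u \<notin> set (w0 @ tl w)"
    using assms(2-5) walk_append_tl[of E w0 w] set_append_tl_subset[of w0 w]
      last_append_tl[of w w0]
    by auto
  then show ?thesis
    unfolding reach_avoiding_def by blast
qed

theorem lemma1:
  fixes V :: "'a set" and E T :: "'a \<Rightarrow> 'a \<Rightarrow> bool" and u p q :: 'a and P :: "'a list"
  assumes "graph V E"
    and "tree_3_spanner V E T"
    and "u \<in> V" "p \<in> V" "q \<in> V"
    and "is_path T p q P" and "u \<in> set P"
    and "p \<notin> closed_nbhd T u" and "q \<notin> closed_nbhd T u"
  shows "\<forall>Q. is_path E p q Q \<longrightarrow> set Q \<inter> closed_nbhd T u \<noteq> {}"
proof (intro allI impI notI)
  fix Q assume Q: "is_path E p q Q" and avoid: "set Q \<inter> closed_nbhd T u = {}"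
  have tree: "tree V T" and spanner: "\<forall>a\<in>V. \<forall>b\<in>V. dist T a b \<le> 3 * dist E a b"
    using assms(2) unfolding tree_3_spanner_def by auto
  have symT: "\<And>a b. T a b \<Longrightarrow> T b a" and conn: "connected_on V T"
    using tree unfolding tree_def graph_def by auto
  let ?S = "reach_avoiding T u p"
  have "p \<in> ?S" "q \<notin> ?S"
    using assms(6-9) tree_walk_through_path_vertex[OF tree assms(6,7)] reach_avoiding_start
    unfolding reach_avoiding_def closed_nbhd_def by auto
  then obtain x y where xy: "E x y" "x \<in> ?S" "y \<notin> ?S" "x \<in> set Q" "y \<in> set Q"
    using walk_crossing_edge[of E Q ?S] Q by (auto simp: is_path_def)
  have "x \<in> V" "y \<in> V"
    using assms(1) xy(1) unfolding graph_def by auto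
  then obtain w where w: "walk T w" "hd w = x" "last w = y" "length w = Suc (dist T x y)"
    using conn walk_of_length_dist unfolding connected_on_def by metis
  have "length w \<le> 4"
    using w(4) spanner dist_le_1_if_adjacent[of E, OF xy(1)] \<open>x \<in> V\<close> \<open>y \<in> V\<close> by fastforce
  then have "u \<notin> set w"
    using walk_length_le_4_near_ends[OF w(1)] w(2,3) xy(4,5) avoid symT
    unfolding closed_nbhd_def by blast
  then show False
    using reach_avoiding_walk[OF xy(2) w(1-3)] xy(3) by blast
qed

end
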